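(* Let $m,n\in\mathbb{P}$ and let $K_n=[n]\oplus([1]\sqcup[1])\oplus[n]$. For the poset $[m]\times K_n$ the following are equivalent: (a) $[m]\times K_n$ has a unique rank level of maximal size; (b) $m=1$ or $m=2n+1$; (c) $\mathcal{N}_{[m]\times K_n}$ is monic; (d) $\mathcal{N}_{[m]\times K_n}$ is palindromic.
   Context: $[k]=\{1<\cdots<k\}$ is a chain; $\oplus$ is the ordinal sum (every element of the first summand is below every element of the second), and $[1]\sqcup[1]$ is a two-element antichain. So $K_n$ consists of a chain $1<\cdots<n$, then two incomparable elements, then a chain of $n$ elements, with everything in a lower part below everything in a higher part. $[m]\times K_n$ has the product order; it is graded (all maximal chains have equal length, rank of minimal element $1$, rank increases by one along covers) and its rank levels are the sets of elements of equal rank. $\mathcal{N}_P(t)=\sum_A t^{|A|}$ over all antichains $A$ (including $\emptyset$). A polynomial $\sum_{k=0}^d a_kt^k$ with $a_d\neq0$ is monic if $a_d=1$ and palindromic if $a_k=a_{d-k}$ for all $k$. *)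

theory Defs
  imports "HOL-Computational_Algebra.Polynomial"
begin

definition is_antichain :: "'a set \<Rightarrow> ('a \<Rightarrow> 'a \<Rightarrow> bool) \<Rightarrow> 'a set \<Rightarrow> bool" where
  "is_antichain P le A \<longleftrightarrow> A \<subseteq> P \<and> (\<forall>x\<in>A. \<forall>y\<in>A. le x y \<longrightarrow> x = y)"

definition is_chain :: "'a set \<Rightarrow> ('a \<Rightarrow> 'a \<Rightarrow> bool) \<Rightarrow> 'a set \<Rightarrow> bool" where
  "is_chain P le C \<longleftrightarrow> C \<subseteq> P \<and> (\<forall>x\<in>C. \<forall>y\<in>C. le x y \<or> le y x)"

definition antichain_poly :: "'a set \<Rightarrow> ('a \<Rightarrow> 'a \<Rightarrow> bool) \<Rightarrow> int poly" where
  "antichain_poly P le = (\<Sum>A\<in>{A. is_antichain P le A}. monom 1 (card A))"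

(* rank of x: the maximal size of a chain of elements below x; for a graded poset this is
   the rank with minimal elements of rank 1, increasing by one along covers *)
definition poset_rank :: "'a set \<Rightarrow> ('a \<Rightarrow> 'a \<Rightarrow> bool) \<Rightarrow> 'a \<Rightarrow> nat" where
  "poset_rank P le x = Max (card ` {C. is_chain P le C \<and> (\<forall>y\<in>C. le y x)})"

definition rank_level :: "'a set \<Rightarrow> ('a \<Rightarrow> 'a \<Rightarrow> bool) \<Rightarrow> nat \<Rightarrow> 'a set" where
  "rank_level P le r = {x\<in>P. poset_rank P le x = r}"

definition unique_max_rank_level :: "'a set \<Rightarrow> ('a \<Rightarrow> 'a \<Rightarrow> bool) \<Rightarrow> bool" where
  "unique_max_rank_level P le \<longleftrightarrow>
     (\<exists>r\<in>poset_rank P le ` P. \<forall>r'\<in>poset_rank P le ` P.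
        r' \<noteq> r \<longrightarrow> card (rank_level P le r') < card (rank_level P le r))"

definition palindromic :: "'b::zero poly \<Rightarrow> bool" where
  "palindromic p \<longleftrightarrow> (\<forall>k\<le>degree p. coeff p k = coeff p (degree p - k))"

definition monic_poly :: "'b::{zero,one} poly \<Rightarrow> bool" where
  "monic_poly p \<longleftrightarrow> lead_coeff p = 1"

(* K_n = [n] \<oplus> ([1] \<sqcup> [1]) \<oplus> [n]: elements (l,t) with level l.
   Levels 1..n: the lower chain (tag 0); level n+1: the two incomparable elements
   (tags 0 and 1); levels n+2..2n+1: the upper chain (tag 0).
   Order: equal, or strictly lower level (ordinal sum). *)
definition K_carrier :: "nat \<Rightarrow> (nat \<times> nat) set" where
  "K_carrier n = {(l, 0) | l. 1 \<le> l \<and> l \<le> 2*n+1} \<union> {(n+1, 1)}"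

definition K_le :: "nat \<times> nat \<Rightarrow> nat \<times> nat \<Rightarrow> bool" where
  "K_le x y \<longleftrightarrow> x = y \<or> fst x < fst y"

definition MK_carrier :: "nat \<Rightarrow> nat \<Rightarrow> (nat \<times> (nat \<times> nat)) set" where
  "MK_carrier m n = {1..m} \<times> K_carrier n"

definition MK_le :: "nat \<times> (nat \<times> nat) \<Rightarrow> nat \<times> (nat \<times> nat) \<Rightarrow> bool" where
  "MK_le x y \<longleftrightarrow> fst x \<le> fst y \<and> K_le (snd x) (snd y)"

end

theory Submission
  imports Defs "HOL-Library.Product_Lexorder" "HOL-Library.FuncSet"
begin

text \<open>An element \<open>(c, l, t)\<close> of \<open>[m] \<times> K_n\<close> has rank \<open>c + l - 1\<close>, so a rank level is a
  diagonal of the \<open>m \<times> (2n+1)\<close> grid of chain elements plus possibly the second middle element;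
  the level sizes have a single maximum only if \<open>m = 1\<close> or \<open>m = 2n+1\<close>, and otherwise a plateau.

  Antichains are counted through the linear extension of \<open>K_n\<close> that puts one middle element below
  the other. Antichains that stay antichains there are antichains of the grid \<open>[m] \<times> [2n+2]\<close>, of
  which there are \<open>C(m,k) C(2n+2,k)\<close> of size \<open>k\<close>; the others contain both middle elements and
  correspond to antichains of \<open>[m+1] \<times> [2n+2]\<close> through both middle elements, counted by
  \<open>C(m+1,k) C(2n,k-2)\<close>. The leading coefficient of the resulting polynomial of degree
  \<open>min (m+1) (2n+2)\<close> is \<open>1\<close> exactly when \<open>m = 1\<close> or \<open>m = 2n+1\<close>, and then the coefficients are
  symmetric; a palindromic polynomial with constant term \<open>1\<close> is monic.\<close>

definition prod_le :: "'a::linorder \<times> 'b::linorder \<Rightarrow> 'a \<times> 'b \<Rightarrow> bool" where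
  "prod_le p q \<longleftrightarrow> fst p \<le> fst q \<and> snd p \<le> snd q"

lemma is_antichain_mono: "is_antichain P le A \<Longrightarrow> P \<subseteq> P' \<Longrightarrow> is_antichain P' le A"
  unfolding is_antichain_def by blast

lemma finite_antichains: "finite P \<Longrightarrow> finite {A. is_antichain P le A}"
  unfolding is_antichain_def by (simp add: finite_subset)

lemma coeff_antichain_poly:
  assumes "finite P"
  shows "coeff (antichain_poly P le) k = int (card {A. is_antichain P le A \<and> card A = k})"
proof -
  have "coeff (antichain_poly P le) k = (\<Sum>A\<in>{A. is_antichain P le A}. if card A = k then 1 else 0)"
    unfolding antichain_poly_def coeff_sum coeff_monom by (rule sum.cong) auto
  also have "\<dots> = int (card {A \<in> {A. is_antichain P le A}. card A = k})"
    using finite_antichains[OF assms] by (simp add: sum.inter_filter[symmetric])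
  finally show ?thesis by simp
qed

lemma palindromic_lead_coeff: "palindromic p \<Longrightarrow> lead_coeff p = coeff p 0"
  unfolding palindromic_def by (metis diff_zero le0)

lemma prod_antichain_fst_less:
  assumes "is_antichain P prod_le A" "p \<in> A" "q \<in> A" "fst p < fst q"
  shows "snd q < snd p"
  using assms unfolding is_antichain_def prod_le_def
  by (metis less_le_not_le not_le_imp_less order_less_imp_le)

lemma prod_antichain_eq:
  assumes "is_antichain P prod_le A" "p \<in> A" "q \<in> A" "fst p = fst q \<or> snd p = snd q"
  shows "p = q"
proof -
  have "prod_le p q \<or> prod_le q p" using assms(4) unfolding prod_le_def by auto
  then show ?thesis using assms(1-3) unfolding is_antichain_def by auto
qed

lemma prod_antichain_inj_on_fst: "is_antichain P prod_le A \<Longrightarrow> inj_on fst A"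
  by (auto intro: inj_onI prod_antichain_eq)

lemma prod_antichain_inj_on_snd: "is_antichain P prod_le A \<Longrightarrow> inj_on snd A"
  by (auto intro: inj_onI prod_antichain_eq)

lemma prod_antichain_card_fst_less:
  assumes A: "is_antichain P prod_le A" and p: "p \<in> A"
  shows "card {c \<in> fst ` A. c < fst p} = card {v \<in> snd ` A. snd p < v}"
proof -
  have same: "{q \<in> A. fst q < fst p} = {q \<in> A. snd p < snd q}"
  proof (intro Collect_cong conj_cong refl iffI)
    fix q assume "q \<in> A" "fst q < fst p"
    then show "snd p < snd q" using prod_antichain_fst_less[OF A _ p] by blast
  next
    fix q assume q: "q \<in> A" "snd p < snd q"
    then have "fst q \<noteq> fst p" using prod_antichain_eq[OF A q(1) p] by auto
    moreover have "\<not> fst p < fst q" using prod_antichain_fst_less[OF A p q(1)] q(2) by auto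
    ultimately show "fst q < fst p" by auto
  qed
  have "card {c \<in> fst ` A. c < fst p} = card (fst ` {q \<in> A. fst q < fst p})"
    by (rule arg_cong[where f = card]) auto
  also have "\<dots> = card {q \<in> A. snd p < snd q}"
    unfolding same using prod_antichain_inj_on_fst[OF A] by (intro card_image) (auto intro: inj_on_subset)
  also have "\<dots> = card (snd ` {q \<in> A. snd p < snd q})"
    using prod_antichain_inj_on_snd[OF A] by (intro card_image[symmetric]) (auto intro: inj_on_subset)
  also have "snd ` {q \<in> A. snd p < snd q} = {v \<in> snd ` A. snd p < v}" by auto
  finally show ?thesis .
qed

lemma card_greater_strict_mono:
  fixes V :: "'a::linorder set"
  assumes "finite V" "v \<in> V" "u < v"
  shows "card {x \<in> V. v < x} < card {x \<in> V. u < x}"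
  using assms by (intro psubset_card_mono) auto

lemma prod_antichain_subsetI:
  assumes A: "is_antichain P prod_le A" and B: "is_antichain P' prod_le B" and "finite A"
    and fst_eq: "fst ` A = fst ` B" and snd_eq: "snd ` A = snd ` B"
  shows "A \<subseteq> B"
proof
  fix p assume p: "p \<in> A"
  then obtain q where q: "q \<in> B" "fst q = fst p" using fst_eq by (metis imageE imageI)
  have count_eq: "card {v \<in> snd ` A. snd p < v} = card {v \<in> snd ` A. snd q < v}"
    using prod_antichain_card_fst_less[OF A p] prod_antichain_card_fst_less[OF B q(1)] q(2) fst_eq snd_eq
    by simp
  have fin: "finite (snd ` A)" using \<open>finite A\<close> by simp
  have "snd q \<in> snd ` A" "snd p \<in> snd ` A" using q p snd_eq by auto
  have "snd p = snd q"
  proof (rule ccontr)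
    assume "snd p \<noteq> snd q"
    then consider "snd p < snd q" | "snd q < snd p" by fastforce
    then show False
    proof cases
      case 1
      show False using card_greater_strict_mono[OF fin \<open>snd q \<in> snd ` A\<close> 1] count_eq by simp
    next
      case 2
      show False using card_greater_strict_mono[OF fin \<open>snd p \<in> snd ` A\<close> 2] count_eq by simp
    qed
  qed
  then show "p \<in> B" using q by (metis prod_eqI)
qed

lemma prod_antichain_exists:
  fixes I :: "'a::linorder set" and J :: "'b::linorder set"
  assumes "finite I" "finite J" "card I = card J"
  shows "\<exists>A. is_antichain (I \<times> J) prod_le A \<and> fst ` A = I \<and> snd ` A = J"
proof -
  define xs where "xs = sorted_list_of_set I"
  define ys where "ys = rev (sorted_list_of_set J)"
  have len: "length ys = length xs" unfolding xs_def ys_def using assms by simp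
  have sx: "sorted_wrt (<) xs" unfolding xs_def by simp
  have sy: "sorted_wrt (>) ys" unfolding ys_def by (simp add: sorted_wrt_rev)
  define A where "A = set (zip xs ys)"
  have fst_A: "fst ` A = I" unfolding A_def using len assms
    by (metis map_fst_zip set_map xs_def set_sorted_list_of_set)
  have snd_A: "snd ` A = J" unfolding A_def using len assms
    by (metis map_snd_zip set_map ys_def set_sorted_list_of_set set_rev)
  have "p = q" if p: "p \<in> A" and q: "q \<in> A" and le: "prod_le p q" for p q
  proof -
    obtain i j where ij: "i < length xs" "j < length xs" "p = (xs ! i, ys ! i)" "q = (xs ! j, ys ! j)"
      using p q len unfolding A_def by (auto simp: set_zip)
    have "\<not> i < j" using le ij sorted_wrt_nth_less[OF sy, of i j] len
      unfolding prod_le_def by (auto dest: leD)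
    moreover have "\<not> j < i" using le ij sorted_wrt_nth_less[OF sx, of j i]
      unfolding prod_le_def by (auto dest: leD)
    ultimately show ?thesis using ij by (metis linorder_neqE_nat)
  qed
  then have "is_antichain (I \<times> J) prod_le A"
    unfolding is_antichain_def using fst_A snd_A by force
  then show ?thesis using fst_A snd_A by blast
qed

lemma bij_betw_prod_antichain_projections:
  fixes X :: "'a::linorder set" and Y :: "'b::linorder set"
  assumes fX: "finite X" and fY: "finite Y"
  shows "bij_betw (\<lambda>A. (fst ` A, snd ` A))
     {A. is_antichain (X \<times> Y) prod_le A \<and> card A = k \<and> Q (snd ` A)}
     ({I. I \<subseteq> X \<and> card I = k} \<times> {J. J \<subseteq> Y \<and> card J = k \<and> Q J})"
  (is "bij_betw _ ?L ?R")
proof -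
  have finite_A: "finite A" if "is_antichain (X \<times> Y) prod_le A" for A
    using that fX fY unfolding is_antichain_def by (meson finite_SigmaI finite_subset)
  have card_proj: "card (fst ` A) = card A" "card (snd ` A) = card A"
    if "is_antichain P prod_le A" for P and A :: "('a \<times> 'b) set"
    using card_image prod_antichain_inj_on_fst prod_antichain_inj_on_snd that by blast+
  show ?thesis
  proof (rule bij_betwI')
    fix A B assume A: "A \<in> ?L" and B: "B \<in> ?L"
    show "((fst ` A, snd ` A) = (fst ` B, snd ` B)) = (A = B)"
    proof
      assume "(fst ` A, snd ` A) = (fst ` B, snd ` B)"
      then have "fst ` A = fst ` B" "snd ` A = snd ` B" by simp_all
      moreover have "is_antichain (X \<times> Y) prod_le A" "is_antichain (X \<times> Y) prod_le B"
        using A B by simp_all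
      ultimately show "A = B"
        using prod_antichain_subsetI[of _ A _ B] prod_antichain_subsetI[of _ B _ A] finite_A by blast
    qed simp
  next
    fix A assume A: "A \<in> ?L"
    then have "A \<subseteq> X \<times> Y" unfolding is_antichain_def by blast
    then show "(fst ` A, snd ` A) \<in> ?R" using A card_proj by auto
  next
    fix IJ assume "IJ \<in> ?R"
    then obtain I J where IJ: "IJ = (I, J)" "I \<subseteq> X" "J \<subseteq> Y" "card I = k" "card J = k" "Q J"
      by auto
    then have "finite I" "finite J" using fX fY finite_subset by blast+
    then obtain A where A: "is_antichain (I \<times> J) prod_le A" "fst ` A = I" "snd ` A = J"
      using prod_antichain_exists[of I J] IJ(4,5) by auto
    then have "is_antichain (X \<times> Y) prod_le A" using IJ(2,3) by (blast intro: is_antichain_mono)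
    then have "A \<in> ?L" using A card_proj IJ by auto
    then show "\<exists>A\<in>?L. IJ = (fst ` A, snd ` A)" using A IJ(1) by blast
  qed
qed

lemma card_prod_antichains:
  fixes X :: "'a::linorder set" and Y :: "'b::linorder set"
  assumes "finite X" "finite Y"
  shows "card {A. is_antichain (X \<times> Y) prod_le A \<and> card A = k \<and> Q (snd ` A)}
       = (card X choose k) * card {J. J \<subseteq> Y \<and> card J = k \<and> Q J}"
  using bij_betw_same_card[OF bij_betw_prod_antichain_projections[OF assms, of k Q]] assms
  by (simp add: card_cartesian_product n_subsets)

lemma card_subsets_containing:
  assumes Y: "finite Y" and Z: "Z \<subseteq> Y"
  shows "card {J. J \<subseteq> Y \<and> card J = k \<and> Z \<subseteq> J}
       = (if card Z \<le> k then (card Y - card Z) choose (k - card Z) else 0)"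
proof (cases "card Z \<le> k")
  case True
  have fZ: "finite Z" using Y Z finite_subset by blast
  have "bij_betw (\<lambda>B. B \<union> Z) {B. B \<subseteq> Y - Z \<and> card B = k - card Z}
          {J. J \<subseteq> Y \<and> card J = k \<and> Z \<subseteq> J}"
  proof (rule bij_betwI[where g = "\<lambda>J. J - Z"])
    show "(\<lambda>B. B \<union> Z) \<in> {B. B \<subseteq> Y - Z \<and> card B = k - card Z} \<rightarrow> {J. J \<subseteq> Y \<and> card J = k \<and> Z \<subseteq> J}"
    proof
      fix B assume B: "B \<in> {B. B \<subseteq> Y - Z \<and> card B = k - card Z}"
      then have "card (B \<union> Z) = card B + card Z"
        using Y fZ by (intro card_Un_disjoint) (auto intro: finite_subset)
      then show "B \<union> Z \<in> {J. J \<subseteq> Y \<and> card J = k \<and> Z \<subseteq> J}" using B True Z by auto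
    qed
    show "(\<lambda>J. J - Z) \<in> {J. J \<subseteq> Y \<and> card J = k \<and> Z \<subseteq> J} \<rightarrow> {B. B \<subseteq> Y - Z \<and> card B = k - card Z}"
      using fZ by (auto simp: card_Diff_subset)
  qed auto
  then have "card {J. J \<subseteq> Y \<and> card J = k \<and> Z \<subseteq> J} = card (Y - Z) choose (k - card Z)"
    using Y by (simp add: bij_betw_same_card[symmetric] n_subsets)
  then show ?thesis using True Z fZ by (simp add: card_Diff_subset)
next
  case False
  then have "{J. J \<subseteq> Y \<and> card J = k \<and> Z \<subseteq> J} = {}"
    using Y by (auto dest: card_mono[OF finite_subset])
  then have "card {J. J \<subseteq> Y \<and> card J = k \<and> Z \<subseteq> J} = 0" by (simp only: card.empty)
  then show ?thesis using False by simp
qed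

lemma unique_max_rank_level_iff:
  assumes "finite P"
  shows "unique_max_rank_level P le \<longleftrightarrow>
    (\<exists>r. \<forall>r'. r' \<noteq> r \<longrightarrow> card (rank_level P le r') < card (rank_level P le r))"
proof -
  have rank_iff: "r \<in> poset_rank P le ` P \<longleftrightarrow> 0 < card (rank_level P le r)" for r
    using assms unfolding rank_level_def by (auto simp: card_gt_0_iff)
  show ?thesis
  proof
    assume "unique_max_rank_level P le"
    then obtain r where r: "r \<in> poset_rank P le ` P"
      and max: "\<forall>r'\<in>poset_rank P le ` P. r' \<noteq> r \<longrightarrow> card (rank_level P le r') < card (rank_level P le r)"
      unfolding unique_max_rank_level_def by blast
    then show "\<exists>r. \<forall>r'. r' \<noteq> r \<longrightarrow> card (rank_level P le r') < card (rank_level P le r)"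
      using rank_iff by (metis not_gr0)
  next
    assume "\<exists>r. \<forall>r'. r' \<noteq> r \<longrightarrow> card (rank_level P le r') < card (rank_level P le r)"
    then obtain r where max: "\<forall>r'. r' \<noteq> r \<longrightarrow> card (rank_level P le r') < card (rank_level P le r)"
      by blast
    then have "card (rank_level P le (Suc r)) < card (rank_level P le r)" by simp
    then have "r \<in> poset_rank P le ` P" using rank_iff[of r] by simp
    then show "unique_max_rank_level P le" using max unfolding unique_max_rank_level_def by blast
  qed
qed

lemma K_carrier_iff:
  "(l, t) \<in> K_carrier n \<longleftrightarrow> (t = 0 \<and> 1 \<le> l \<and> l \<le> 2*n+1) \<or> (l = n+1 \<and> t = 1)"
  unfolding K_carrier_def by auto

lemma MK_carrier_iff:
  "(c, l, t) \<in> MK_carrier m n \<longleftrightarrow> c \<in> {1..m} \<and> (l, t) \<in> K_carrier n"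
  unfolding MK_carrier_def by auto

lemma K_carrier_cases:
  assumes "(l, t) \<in> K_carrier n"
  obtains (low) "t = 0" "1 \<le> l" "l \<le> n" | (mid0) "l = n+1" "t = 0" | (mid1) "l = n+1" "t = 1"
    | (high) "t = 0" "n+1 < l" "l \<le> 2*n+1"
  using assms that by (cases "l \<le> n"; cases "l = n+1") (auto simp: K_carrier_iff)

lemma MK_le_iff: "MK_le (c, l, t) (c', l', t') \<longleftrightarrow> c \<le> c' \<and> ((l, t) = (l', t') \<or> l < l')"
  unfolding MK_le_def K_le_def by auto

lemma prod_le_iff: "prod_le (c, l, t) (c', l', t') \<longleftrightarrow> c \<le> c' \<and> (l < l' \<or> l = l' \<and> t \<le> t')"
  unfolding prod_le_def by auto

lemma finite_K_carrier: "finite (K_carrier n)"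
  unfolding K_carrier_def by (auto intro: finite_subset[of _ "{1..2*n+1} \<times> {0}"])

lemma card_K_carrier: "card (K_carrier n) = 2*n+2"
proof -
  have K: "K_carrier n = insert (n+1, 1) ((\<lambda>l. (l, 0)) ` {1..2*n+1})"
    unfolding K_carrier_def by auto
  show ?thesis unfolding K by (subst card_insert_disjoint) (auto simp: card_image inj_on_def)
qed

lemma finite_MK_carrier: "finite (MK_carrier m n)"
  unfolding MK_carrier_def using finite_K_carrier by simp

lemma card_MK_chain_below:
  assumes C: "is_chain (MK_carrier m n) MK_le C" and below: "\<forall>y\<in>C. MK_le y (c, l, t)"
  shows "card C \<le> c + l - 1"
proof -
  let ?h = "\<lambda>(a, b, s). a + b :: nat"
  have "inj_on ?h C"
  proof (rule inj_onI)
    fix y z assume "y \<in> C" "z \<in> C" "?h y = ?h z"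
    moreover have "MK_le y z \<or> MK_le z y" using C \<open>y \<in> C\<close> \<open>z \<in> C\<close> unfolding is_chain_def by blast
    ultimately show "y = z" by (cases y, cases z) (auto simp: MK_le_iff)
  qed
  moreover have "?h ` C \<subseteq> {2..c+l}"
  proof clarify
    fix a b s assume y: "(a, b, s) \<in> C"
    then have "(a, b, s) \<in> MK_carrier m n" using C unfolding is_chain_def by blast
    moreover have "MK_le (a, b, s) (c, l, t)" using below y by blast
    ultimately show "a + b \<in> {2..c+l}" by (auto simp: MK_carrier_iff K_carrier_iff MK_le_iff)
  qed
  ultimately have "card C \<le> card {2..c+l}" by (metis card_image card_mono finite_atLeastAtMost)
  then show ?thesis by simp
qed

lemma poset_rank_MK:
  assumes x: "(c, l, t) \<in> MK_carrier m n"
  shows "poset_rank (MK_carrier m n) MK_le (c, l, t) = c + l - 1"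
proof -
  let ?S = "{C. is_chain (MK_carrier m n) MK_le C \<and> (\<forall>y\<in>C. MK_le y (c, l, t))}"
  have x': "1 \<le> c" "c \<le> m" "(l, t) \<in> K_carrier n" "1 \<le> l" using x by (auto simp: MK_carrier_iff K_carrier_iff)
  define C where "C = (\<lambda>j. (1, j, 0)) ` {1..<l} \<union> (\<lambda>j. (j, l, t)) ` {1..c}"
  have "C \<subseteq> MK_carrier m n" using x' unfolding C_def by (auto simp: MK_carrier_iff K_carrier_iff)
  then have "C \<in> ?S" using x' unfolding C_def is_chain_def by (auto simp: MK_le_iff)
  moreover have "card C = c + l - 1"
    unfolding C_def using x' by (subst card_Un_disjoint) (auto simp: card_image inj_on_def)
  moreover have "finite ?S"
    using finite_MK_carrier by (auto intro: finite_subset[of _ "Pow (MK_carrier m n)"] simp: is_chain_def)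
  ultimately show ?thesis
    unfolding poset_rank_def using card_MK_chain_below by (intro Max_eqI) (auto intro: rev_image_eqI)
qed

lemma rank_level_MK:
  "rank_level (MK_carrier m n) MK_le r = (\<lambda>c. (c, r+1-c, 0)) ` {max 1 (r - 2*n)..min m r}
     \<union> (if n < r \<and> r \<le> m + n then {(r - n, n+1, 1)} else {})"
  (is "_ = ?chain \<union> ?mid")
proof -
  have "rank_level (MK_carrier m n) MK_le r = {(c, l, t) \<in> MK_carrier m n. c + l = r + 1}"
    unfolding rank_level_def by (auto simp: poset_rank_MK MK_carrier_iff K_carrier_iff)
  also have "\<dots> = ?chain \<union> ?mid"
  proof (intro equalityI subsetI)
    fix x assume "x \<in> {(c, l, t) \<in> MK_carrier m n. c + l = r + 1}"
    then obtain c l t where "x = (c, l, t)" "(c, l, t) \<in> MK_carrier m n" "c + l = r + 1" by auto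
    then show "x \<in> ?chain \<union> ?mid"
      by (auto simp: MK_carrier_iff K_carrier_iff image_iff intro!: bexI[of _ c])
  next
    fix x assume "x \<in> ?chain \<union> ?mid"
    then show "x \<in> {(c, l, t) \<in> MK_carrier m n. c + l = r + 1}"
      by (auto simp: MK_carrier_iff K_carrier_iff split: if_splits)
  qed
  finally show ?thesis .
qed

definition MK_level_size :: "nat \<Rightarrow> nat \<Rightarrow> nat \<Rightarrow> nat" where
  "MK_level_size m n r = (Suc (min m r) - max 1 (r - 2*n)) + (if n < r \<and> r \<le> m + n then 1 else 0)"

lemma card_rank_level_MK: "card (rank_level (MK_carrier m n) MK_le r) = MK_level_size m n r"
proof -
  have "card ((\<lambda>c. (c, r+1-c, 0::nat)) ` {max 1 (r - 2*n)..min m r}) = Suc (min m r) - max 1 (r - 2*n)"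
    by (subst card_image) (auto simp: inj_on_def)
  then show ?thesis
    unfolding rank_level_MK MK_level_size_def by (subst card_Un_disjoint) auto
qed

lemma MK_level_size_le: "MK_level_size m n r \<le> min m (2*n+1) + 1"
  unfolding MK_level_size_def by (simp add: min_def max_def split: if_splits nat_diff_split)

lemma MK_level_size_plateau:
  assumes "1 \<le> m" "1 \<le> n" "\<not> (m = 1 \<or> m = 2*n+1)"
  shows "\<exists>r. MK_level_size m n r = min m (2*n+1) + 1 \<and> MK_level_size m n (r+1) = min m (2*n+1) + 1"
proof (cases "m \<le> 2*n")
  case True
  then have "2 \<le> m" using assms by simp
  then show ?thesis using True
    unfolding MK_level_size_def by (intro exI[of _ "max m (n+1)"]) (simp add: min_def max_def split: if_splits nat_diff_split)
next
  case False
  then have "2*n+2 \<le> m" using assms by simp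
  then show ?thesis
    unfolding MK_level_size_def by (intro exI[of _ "2*n+1"]) (simp add: min_def max_def split: if_splits nat_diff_split)
qed

lemma MK_level_size_unique_max_iff:
  assumes "1 \<le> m" "1 \<le> n"
  shows "(\<exists>r. \<forall>r'. r' \<noteq> r \<longrightarrow> MK_level_size m n r' < MK_level_size m n r) \<longleftrightarrow> m = 1 \<or> m = 2*n+1"
proof
  assume "m = 1 \<or> m = 2*n+1"
  then show "\<exists>r. \<forall>r'. r' \<noteq> r \<longrightarrow> MK_level_size m n r' < MK_level_size m n r"
  proof
    assume "m = 1"
    then have "MK_level_size m n r' < MK_level_size m n (n+1)" if "r' \<noteq> n+1" for r'
      using that unfolding MK_level_size_def by (simp add: min_def max_def split: if_splits nat_diff_split)
    then show ?thesis by blast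
  next
    assume "m = 2*n+1"
    then have "MK_level_size m n r' < MK_level_size m n (2*n+1)" if "r' \<noteq> 2*n+1" for r'
      using that unfolding MK_level_size_def by (simp add: min_def max_def split: if_splits nat_diff_split)
    then show ?thesis by blast
  qed
next
  assume "\<exists>r. \<forall>r'. r' \<noteq> r \<longrightarrow> MK_level_size m n r' < MK_level_size m n r"
  then obtain r where r: "\<forall>r'. r' \<noteq> r \<longrightarrow> MK_level_size m n r' < MK_level_size m n r" by blast
  show "m = 1 \<or> m = 2*n+1"
  proof (rule ccontr)
    assume "\<not> (m = 1 \<or> m = 2*n+1)"
    then obtain r1 where r1: "MK_level_size m n r1 = min m (2*n+1) + 1"
      "MK_level_size m n (r1+1) = min m (2*n+1) + 1"
      using MK_level_size_plateau[OF assms] by blast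
    have "r1 \<noteq> r \<or> r1 + 1 \<noteq> r" by simp
    then have "MK_level_size m n r1 < MK_level_size m n r \<or> MK_level_size m n (r1+1) < MK_level_size m n r"
      using r by blast
    then show False using r1 MK_level_size_le[of m n r] by linarith
  qed
qed

text \<open>Ordering \<open>K_carrier n\<close> lexicographically refines \<open>K_le\<close> to a chain, with \<open>(n+1, 0)\<close>
  below \<open>(n+1, 1)\<close>. The only incomparable pairs of \<open>MK_le\<close> that become comparable in the
  product order \<open>prod_le\<close> are the middle pairs below.\<close>

definition middle_pair :: "nat \<Rightarrow> (nat \<times> nat \<times> nat) set \<Rightarrow> bool" where
  "middle_pair n A \<longleftrightarrow> (\<exists>x y. (x, n+1, 0) \<in> A \<and> (y, n+1, 1) \<in> A \<and> x \<le> y)"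

lemma MK_le_imp_prod_le: "MK_le p q \<Longrightarrow> prod_le p q"
  unfolding MK_le_def K_le_def prod_le_def by (auto simp: less_eq_prod_def)

lemma prod_le_not_MK_le:
  assumes "p \<in> MK_carrier m n" "q \<in> MK_carrier m n" "prod_le p q" "\<not> MK_le p q"
  shows "\<exists>x y. p = (x, n+1, 0) \<and> q = (y, n+1, 1) \<and> x \<le> y"
  using assms unfolding MK_carrier_def by (cases p, cases q) (auto simp: MK_le_iff prod_le_iff K_carrier_iff)

lemma MK_antichain_iff_prod_antichain:
  "is_antichain (MK_carrier m n) MK_le A \<and> \<not> middle_pair n A
     \<longleftrightarrow> is_antichain ({1..m} \<times> K_carrier n) prod_le A"
proof
  assume A: "is_antichain (MK_carrier m n) MK_le A \<and> \<not> middle_pair n A"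
  have "p = q" if "p \<in> A" "q \<in> A" "prod_le p q" for p q
    using A that prod_le_not_MK_le[of p m n q] unfolding is_antichain_def middle_pair_def by blast
  then show "is_antichain ({1..m} \<times> K_carrier n) prod_le A"
    using A unfolding is_antichain_def MK_carrier_def by blast
next
  assume A: "is_antichain ({1..m} \<times> K_carrier n) prod_le A"
  have "(x, n+1, 0::nat) \<notin> A \<or> (y, n+1, 1::nat) \<notin> A" if "x \<le> y" for x y
  proof -
    have "prod_le (x, n+1, 0::nat) (y, n+1, 1)" using that by (simp add: prod_le_iff)
    then show ?thesis using A unfolding is_antichain_def by auto
  qed
  then show "is_antichain (MK_carrier m n) MK_le A \<and> \<not> middle_pair n A"
    using A MK_le_imp_prod_le unfolding is_antichain_def MK_carrier_def middle_pair_def by blast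
qed

text \<open>Moving the lower chain and the element \<open>(n+1, 1)\<close> one column to the right and swapping
  the two middle elements turns antichains with a middle pair into antichains of the lexicographic
  grid with one more column that meet both middle elements.\<close>

definition twist :: "nat \<Rightarrow> nat \<times> nat \<times> nat \<Rightarrow> nat \<times> nat \<times> nat" where
  "twist n = (\<lambda>(c, l, t).
     if l \<le> n then (c+1, l, t)
     else if (l, t) = (n+1, 1) then (c+1, n+1, 0)
     else if (l, t) = (n+1, 0) then (c, n+1, 1)
     else (c, l, t))"

definition untwist :: "nat \<Rightarrow> nat \<times> nat \<times> nat \<Rightarrow> nat \<times> nat \<times> nat" where
  "untwist n = (\<lambda>(c, l, t).
     if l \<le> n then (c-1, l, t)
     else if (l, t) = (n+1, 0) then (c-1, n+1, 1)
     else if (l, t) = (n+1, 1) then (c, n+1, 0)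
     else (c, l, t))"

lemma twist_low: "l \<le> n \<Longrightarrow> twist n (c, l, t) = (c+1, l, t)"
  and twist_mid0: "twist n (c, n+1, 0) = (c, n+1, 1)"
  and twist_mid1: "twist n (c, n+1, 1) = (c+1, n+1, 0)"
  and twist_high: "n+1 < l \<Longrightarrow> twist n (c, l, t) = (c, l, t)"
  by (simp_all add: twist_def)

lemma untwist_twist: "p \<in> MK_carrier m n \<Longrightarrow> untwist n (twist n p) = p"
  by (cases p) (auto simp: twist_def untwist_def MK_carrier_iff K_carrier_iff)

lemma twist_untwist: "p \<in> {1..m+1} \<times> K_carrier n \<Longrightarrow> twist n (untwist n p) = p"
  by (cases p) (auto simp: twist_def untwist_def K_carrier_iff)

lemma twist_in_grid: "p \<in> MK_carrier m n \<Longrightarrow> twist n p \<in> {1..m+1} \<times> K_carrier n"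
  by (cases p) (auto simp: twist_def MK_carrier_iff K_carrier_iff)

lemma inj_on_twist: "inj_on (twist n) (MK_carrier m n)"
  by (rule inj_on_inverseI[where g = "untwist n"]) (rule untwist_twist)

lemma inj_on_untwist: "inj_on (untwist n) ({1..m+1} \<times> K_carrier n)"
  by (rule inj_on_inverseI[where g = "twist n"]) (rule twist_untwist)

lemma untwist_twist_image:
  assumes "A \<subseteq> MK_carrier m n"
  shows "untwist n ` twist n ` A = A"
proof -
  have "untwist n ` twist n ` A = (\<lambda>p. p) ` A"
    unfolding image_image by (rule image_cong) (use assms untwist_twist in blast)+
  then show ?thesis by simp
qed

lemma twist_untwist_image:
  assumes "B \<subseteq> {1..m+1} \<times> K_carrier n"
  shows "twist n ` untwist n ` B = B"
proof -
  have "twist n ` untwist n ` B = (\<lambda>p. p) ` B"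
    unfolding image_image by (rule image_cong) (use assms twist_untwist in blast)+
  then show ?thesis by simp
qed

definition middle_shaped :: "nat \<Rightarrow> nat \<Rightarrow> nat \<Rightarrow> (nat \<times> nat \<times> nat) set \<Rightarrow> bool" where
  "middle_shaped n x y A \<longleftrightarrow> x \<le> y \<and> (\<forall>(c, l, t) \<in> A.
     (l \<le> n \<and> t = 0 \<and> y < c) \<or> (l = n+1 \<and> t = 0 \<and> c = x) \<or> (l = n+1 \<and> t = 1 \<and> c = y)
     \<or> (n+1 < l \<and> t = 0 \<and> c < x))"

lemma MK_antichain_middle_shaped:
  assumes A: "is_antichain (MK_carrier m n) MK_le A"
    and x: "(x, n+1, 0) \<in> A" and y: "(y, n+1, 1) \<in> A" and "x \<le> y"
  shows "middle_shaped n x y A"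
proof -
  have anti: "p = q" if "p \<in> A" "q \<in> A" "MK_le p q \<or> MK_le q p" for p q
    using A that unfolding is_antichain_def by blast
  have "(l \<le> n \<and> t = 0 \<and> y < c) \<or> (l = n+1 \<and> t = 0 \<and> c = x) \<or> (l = n+1 \<and> t = 1 \<and> c = y)
     \<or> (n+1 < l \<and> t = 0 \<and> c < x)" if p: "(c, l, t) \<in> A" for c l t
  proof -
    have "(l, t) \<in> K_carrier n" using A p unfolding is_antichain_def MK_carrier_def by blast
    then show ?thesis
    proof (cases rule: K_carrier_cases)
      case low
      then show ?thesis using anti[OF p y] by (force simp: MK_le_iff)
    next
      case mid0
      then show ?thesis using anti[OF p x] by (force simp: MK_le_iff)
    next
      case mid1
      then show ?thesis using anti[OF p y] by (force simp: MK_le_iff)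
    next
      case high
      then show ?thesis using anti[OF p x] by (force simp: MK_le_iff)
    qed
  qed
  then show ?thesis using \<open>x \<le> y\<close> unfolding middle_shaped_def by blast
qed

lemma middle_shapedD:
  assumes "middle_shaped n x y A" "(c, l, t) \<in> A"
  shows "(l \<le> n \<and> t = 0 \<and> y < c) \<or> (l = n+1 \<and> t = 0 \<and> c = x) \<or> (l = n+1 \<and> t = 1 \<and> c = y)
     \<or> (n+1 < l \<and> t = 0 \<and> c < x)"
  using assms unfolding middle_shaped_def by fastforce

lemma middle_shaped_MK_le_iff:
  assumes A: "middle_shaped n x y A" and p: "p \<in> A" and q: "q \<in> A"
  shows "MK_le p q \<longleftrightarrow> prod_le (twist n p) (twist n q)"
proof -
  obtain c l t c' l' t' where pq: "p = (c, l, t)" "q = (c', l', t')" by (metis prod.exhaust)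
  have "x \<le> y" using A unfolding middle_shaped_def by blast
  from middle_shapedD[OF A p[unfolded pq]] middle_shapedD[OF A q[unfolded pq]] \<open>x \<le> y\<close>
  show ?thesis unfolding pq
    by (elim disjE conjE; simp only: twist_low twist_mid0 twist_mid1 twist_high MK_le_iff prod_le_iff;
        linarith?; auto)
qed

lemma prod_antichain_middles_shape:
  assumes B: "is_antichain ({1..m+1} \<times> K_carrier n) prod_le B"
    and u: "(u, n+1, 0) \<in> B" and w: "(w, n+1, 1) \<in> B" and p: "(c, l, t) \<in> B"
  shows "w < u \<and> ((l \<le> n \<and> t = 0 \<and> u < c) \<or> (l = n+1 \<and> t = 0 \<and> c = u)
     \<or> (l = n+1 \<and> t = 1 \<and> c = w) \<or> (n+1 < l \<and> t = 0 \<and> c < w))"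
proof -
  have anti: "p = q" if "p \<in> B" "q \<in> B" "prod_le p q \<or> prod_le q p" for p q
    using B that unfolding is_antichain_def by blast
  have "w < u" using anti[OF u w] by (fastforce simp: prod_le_iff)
  have "(l, t) \<in> K_carrier n" using B p unfolding is_antichain_def by blast
  then show ?thesis
  proof (cases rule: K_carrier_cases)
    case low
    then show ?thesis using \<open>w < u\<close> anti[OF p u] by (force simp: prod_le_iff)
  next
    case mid0
    then show ?thesis using \<open>w < u\<close> anti[OF p u] by (force simp: prod_le_iff)
  next
    case mid1
    then show ?thesis using \<open>w < u\<close> anti[OF p w] by (force simp: prod_le_iff)
  next
    case high
    then show ?thesis using \<open>w < u\<close> anti[OF p w] by (force simp: prod_le_iff)
  qed
qed

lemma prod_antichain_untwist_middle_shaped: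
  assumes B: "is_antichain ({1..m+1} \<times> K_carrier n) prod_le B"
    and u: "(u, n+1, 0) \<in> B" and w: "(w, n+1, 1) \<in> B"
  shows "middle_shaped n w (u - 1) (untwist n ` B) \<and> untwist n ` B \<subseteq> MK_carrier m n"
proof -
  have "w < u" using prod_antichain_middles_shape[OF B u w u] by blast
  have "u \<le> m+1" "1 \<le> w" using B u w unfolding is_antichain_def by auto
  have elem: "q \<in> MK_carrier m n \<and> (case q of (c', l', t') \<Rightarrow>
      (l' \<le> n \<and> t' = 0 \<and> u - 1 < c') \<or> (l' = n+1 \<and> t' = 0 \<and> c' = w)
      \<or> (l' = n+1 \<and> t' = 1 \<and> c' = u - 1) \<or> (n+1 < l' \<and> t' = 0 \<and> c' < w))"
    if "q \<in> untwist n ` B" for q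
  proof -
    obtain c l t where p: "(c, l, t) \<in> B" and q: "q = untwist n (c, l, t)"
      using \<open>q \<in> untwist n ` B\<close> by (metis imageE prod.exhaust)
    have grid: "c \<in> {1..m+1}" "(l, t) \<in> K_carrier n" using B p unfolding is_antichain_def by blast+
    from prod_antichain_middles_shape[OF B u w p] show ?thesis
      unfolding q using grid \<open>u \<le> m+1\<close> \<open>1 \<le> w\<close>
      by (elim conjE disjE) (auto simp: untwist_def MK_carrier_iff K_carrier_iff)
  qed
  have "w \<le> u - 1" using \<open>w < u\<close> by simp
  then show ?thesis using elem unfolding middle_shaped_def by blast
qed

lemma twist_MK_antichain:
  assumes A: "is_antichain (MK_carrier m n) MK_le A" and "middle_pair n A"
  shows "is_antichain ({1..m+1} \<times> K_carrier n) prod_le (twist n ` A)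
    \<and> {(n+1, 0), (n+1, 1)} \<subseteq> snd ` twist n ` A"
proof -
  obtain x y where x: "(x, n+1, 0) \<in> A" and y: "(y, n+1, 1) \<in> A" and "x \<le> y"
    using \<open>middle_pair n A\<close> unfolding middle_pair_def by blast
  have shaped: "middle_shaped n x y A" by (rule MK_antichain_middle_shaped[OF A x y \<open>x \<le> y\<close>])
  have "p = q" if "p \<in> A" "q \<in> A" "prod_le (twist n p) (twist n q)" for p q
    using A that middle_shaped_MK_le_iff[OF shaped] unfolding is_antichain_def by blast
  moreover have "twist n ` A \<subseteq> {1..m+1} \<times> K_carrier n"
    using A twist_in_grid unfolding is_antichain_def by blast
  ultimately have "is_antichain ({1..m+1} \<times> K_carrier n) prod_le (twist n ` A)"
    unfolding is_antichain_def by blast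
  moreover have "(x, n+1, 1) \<in> twist n ` A" "(y+1, n+1, 0) \<in> twist n ` A"
    using imageI[OF x, of "twist n"] imageI[OF y, of "twist n"] by (simp_all only: twist_mid0 twist_mid1)
  then have "(n+1, 1) \<in> snd ` twist n ` A" "(n+1, 0) \<in> snd ` twist n ` A"
    by (metis snd_conv image_eqI)+
  then have "{(n+1, 0), (n+1, 1)} \<subseteq> snd ` twist n ` A" by simp
  ultimately show ?thesis by blast
qed

lemma untwist_prod_antichain:
  assumes B: "is_antichain ({1..m+1} \<times> K_carrier n) prod_le B"
    and middles: "{(n+1, 0), (n+1, 1)} \<subseteq> snd ` B"
  shows "is_antichain (MK_carrier m n) MK_le (untwist n ` B) \<and> middle_pair n (untwist n ` B)"
proof -
  obtain pu pw where pu: "pu \<in> B" "(n+1, 0) = snd pu" and pw: "pw \<in> B" "(n+1, 1) = snd pw"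
    using middles by blast
  define u w where "u = fst pu" and "w = fst pw"
  have u: "(u, n+1, 0) \<in> B" and w: "(w, n+1, 1) \<in> B"
    using pu pw unfolding u_def w_def by (metis prod.collapse)+
  have shaped: "middle_shaped n w (u - 1) (untwist n ` B)" and sub: "untwist n ` B \<subseteq> MK_carrier m n"
    using prod_antichain_untwist_middle_shaped[OF B u w] by blast+
  have "untwist n p = untwist n q"
    if p: "p \<in> B" and q: "q \<in> B" and le: "MK_le (untwist n p) (untwist n q)" for p q
  proof -
    have "twist n (untwist n p) = p" "twist n (untwist n q) = q"
      using B p q twist_untwist unfolding is_antichain_def by blast+
    then have "prod_le p q"
      using le middle_shaped_MK_le_iff[OF shaped imageI[OF p] imageI[OF q]] by simp
    then show ?thesis using B p q unfolding is_antichain_def by blast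
  qed
  then have "is_antichain (MK_carrier m n) MK_le (untwist n ` B)"
    using sub unfolding is_antichain_def by blast
  moreover have "(w, n+1, 0) \<in> untwist n ` B" "(u - 1, n+1, 1) \<in> untwist n ` B"
    using imageI[OF w, of "untwist n"] imageI[OF u, of "untwist n"] by (simp_all add: untwist_def)
  then have "middle_pair n (untwist n ` B)"
    using shaped unfolding middle_pair_def middle_shaped_def by blast
  ultimately show ?thesis by blast
qed

lemma card_MK_antichains_without_middle_pair:
  "card {A. is_antichain (MK_carrier m n) MK_le A \<and> card A = k \<and> \<not> middle_pair n A}
     = (m choose k) * ((2*n+2) choose k)"
proof -
  have "{A. is_antichain (MK_carrier m n) MK_le A \<and> card A = k \<and> \<not> middle_pair n A}
      = {A. is_antichain ({1..m} \<times> K_carrier n) prod_le A \<and> card A = k \<and> True}"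
    using MK_antichain_iff_prod_antichain by blast
  then show ?thesis
    using card_prod_antichains[OF finite_atLeastAtMost[of 1 m] finite_K_carrier[of n], where k = k and Q = "\<lambda>_. True"]
    by (simp add: n_subsets finite_K_carrier card_K_carrier)
qed

lemma bij_betw_twist_image:
  "bij_betw (image (twist n))
     {A. is_antichain (MK_carrier m n) MK_le A \<and> card A = k \<and> middle_pair n A}
     {B. is_antichain ({1..m+1} \<times> K_carrier n) prod_le B \<and> card B = k
         \<and> {(n+1, 0), (n+1, 1)} \<subseteq> snd ` B}"
  (is "bij_betw _ ?S ?T")
proof -
  have S_sub: "A \<subseteq> MK_carrier m n" if "A \<in> ?S" for A
    using that unfolding is_antichain_def by blast
  have T_sub: "B \<subseteq> {1..m+1} \<times> K_carrier n" if "B \<in> ?T" for B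
    using that unfolding is_antichain_def by blast
  show ?thesis
  proof (rule bij_betw_byWitness[where f' = "image (untwist n)"])
    show "\<forall>A\<in>?S. untwist n ` twist n ` A = A" by (intro ballI) (rule untwist_twist_image[OF S_sub])
    show "\<forall>B\<in>?T. twist n ` untwist n ` B = B" by (intro ballI) (rule twist_untwist_image[OF T_sub])
    show "image (twist n) ` ?S \<subseteq> ?T"
    proof (rule image_subsetI)
      fix A assume A: "A \<in> ?S"
      have "card (twist n ` A) = card A"
        by (rule card_image[OF inj_on_subset[OF inj_on_twist S_sub[OF A]]])
      then show "twist n ` A \<in> ?T" using A twist_MK_antichain by auto
    qed
    show "image (untwist n) ` ?T \<subseteq> ?S"
    proof (rule image_subsetI)
      fix B assume B: "B \<in> ?T"
      have "card (untwist n ` B) = card B"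
        by (rule card_image[OF inj_on_subset[OF inj_on_untwist T_sub[OF B]]])
      then show "untwist n ` B \<in> ?S" using B untwist_prod_antichain by auto
    qed
  qed
qed

lemma card_MK_antichains_with_middle_pair:
  "card {A. is_antichain (MK_carrier m n) MK_le A \<and> card A = k \<and> middle_pair n A}
     = ((m+1) choose k) * (if 2 \<le> k then (2*n) choose (k-2) else 0)"
proof -
  let ?M = "{(n+1, 0), (n+1, 1)} :: (nat \<times> nat) set"
  have M_sub: "?M \<subseteq> K_carrier n" by (auto simp: K_carrier_def)
  have "card {A. is_antichain (MK_carrier m n) MK_le A \<and> card A = k \<and> middle_pair n A}
      = card {B. is_antichain ({1..m+1} \<times> K_carrier n) prod_le B \<and> card B = k \<and> ?M \<subseteq> snd ` B}"
    by (rule bij_betw_same_card[OF bij_betw_twist_image])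
  also have "\<dots> = ((m+1) choose k) * card {J. J \<subseteq> K_carrier n \<and> card J = k \<and> ?M \<subseteq> J}"
    using card_prod_antichains[OF finite_atLeastAtMost[of 1 "m+1"] finite_K_carrier[of n],
        where k = k and Q = "\<lambda>J. ?M \<subseteq> J"]
    by simp
  also have "card {J. J \<subseteq> K_carrier n \<and> card J = k \<and> ?M \<subseteq> J}
      = (if 2 \<le> k then (2*n) choose (k-2) else 0)"
    using card_subsets_containing[OF finite_K_carrier[of n] M_sub, where k = k]
    by (simp add: card_K_carrier numeral_2_eq_2)
  finally show ?thesis .
qed

definition MK_antichain_count :: "nat \<Rightarrow> nat \<Rightarrow> nat \<Rightarrow> nat" where
  "MK_antichain_count m n k =
     (m choose k) * ((2*n+2) choose k) + ((m+1) choose k) * (if 2 \<le> k then (2*n) choose (k-2) else 0)"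

lemma coeff_antichain_poly_MK:
  "coeff (antichain_poly (MK_carrier m n) MK_le) k = int (MK_antichain_count m n k)"
proof -
  let ?S = "\<lambda>P. {A. is_antichain (MK_carrier m n) MK_le A \<and> card A = k \<and> P A}"
  have fin: "finite (?S P)" for P
    using finite_antichains[OF finite_MK_carrier] by (rule finite_subset[rotated]) blast
  have "{A. is_antichain (MK_carrier m n) MK_le A \<and> card A = k}
      = ?S (\<lambda>A. \<not> middle_pair n A) \<union> ?S (middle_pair n)"
    by blast
  then have "card {A. is_antichain (MK_carrier m n) MK_le A \<and> card A = k}
      = card (?S (\<lambda>A. \<not> middle_pair n A)) + card (?S (middle_pair n))"
    using fin by (simp add: card_Un_disjoint disjoint_iff)
  then show ?thesis
    unfolding coeff_antichain_poly[OF finite_MK_carrier] MK_antichain_count_def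
      card_MK_antichains_without_middle_pair card_MK_antichains_with_middle_pair
    by simp
qed

lemma binomial_ge_2: "0 < j \<Longrightarrow> j < a \<Longrightarrow> 2 \<le> a choose j"
proof -
  assume j: "0 < j" "j < a"
  obtain a' j' where a: "a = Suc a'" and jj: "j = Suc j'" using j by (metis gr0_implies_Suc less_imp_Suc_add)
  have "0 < a' choose j'" "0 < a' choose j" using j a jj by (simp_all add: zero_less_binomial_iff)
  then show ?thesis unfolding a jj binomial_Suc_Suc by linarith
qed

text \<open>Both sides equal \<open>(M choose k) + (M choose (k-1)) + (M choose (k-2))\<close>, whose three terms
  are exchanged by \<open>k \<mapsto> M+2-k\<close>.\<close>

lemma binomial_Suc_plus_shift_symmetric:
  fixes M k :: nat
  assumes "k \<le> M + 2"
  shows "((M+1) choose k) + (if 2 \<le> k then M choose (k-2) else 0)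
       = ((M+1) choose (M+2-k)) + (if 2 \<le> M+2-k then M choose (M+2-k-2) else 0)"
proof -
  have split: "((M+1) choose j) + (if 2 \<le> j then M choose (j-2) else 0)
      = (M choose j) + (if 1 \<le> j then M choose (j-1) else 0) + (if 2 \<le> j then M choose (j-2) else 0)"
    for j
    by (cases j) simp_all
  have "M choose k = (if 2 \<le> M+2-k then M choose (M+2-k-2) else 0)"
    using binomial_symmetric[of k M] by (cases "k \<le> M") (simp_all add: binomial_eq_0)
  moreover have "(if 1 \<le> k then M choose (k-1) else 0) = (if 1 \<le> M+2-k then M choose (M+2-k-1) else 0)"
    using binomial_symmetric[of "k-1" M] assms
    by (cases "k = 0 \<or> k = M+2") (auto simp: binomial_eq_0 Suc_diff_le)
  moreover have "(if 2 \<le> k then M choose (k-2) else 0) = M choose (M+2-k)"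
    using binomial_symmetric[of "k-2" M] assms by (cases "2 \<le> k") (simp_all add: binomial_eq_0)
  ultimately show ?thesis unfolding split[of k] split[of "M+2-k"] by linarith
qed

lemma MK_antichain_count_0: "MK_antichain_count m n 0 = 1"
  unfolding MK_antichain_count_def by simp

lemma MK_antichain_count_eq_0: "min (m+1) (2*n+2) < k \<Longrightarrow> MK_antichain_count m n k = 0"
  unfolding MK_antichain_count_def by (auto simp: binomial_eq_0)

lemma MK_antichain_count_top:
  assumes "1 \<le> m"
  shows "MK_antichain_count m n (min (m+1) (2*n+2))
       = (if m \<le> 2*n then (2*n) choose (m-1) else (m choose (2*n+2)) + ((m+1) choose (2*n+2)))"
proof (cases "m \<le> 2*n")
  case True
  then have "min (m+1) (2*n+2) = m+1" by simp
  then show ?thesis using True assms unfolding MK_antichain_count_def by (simp add: binomial_eq_0)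
next
  case False
  then have "min (m+1) (2*n+2) = 2*n+2" by simp
  then show ?thesis using False unfolding MK_antichain_count_def by simp
qed

lemma MK_antichain_count_top_pos:
  assumes "1 \<le> m"
  shows "0 < MK_antichain_count m n (min (m+1) (2*n+2))"
proof (cases "m \<le> 2*n")
  case True
  then have "m - 1 \<le> 2*n" by simp
  then show ?thesis using True unfolding MK_antichain_count_top[OF assms] by simp
next
  case False
  then have "2*n+2 \<le> m+1" by simp
  then show ?thesis using False unfolding MK_antichain_count_top[OF assms] by simp
qed

lemma degree_antichain_poly_MK:
  assumes "1 \<le> m"
  shows "degree (antichain_poly (MK_carrier m n) MK_le) = min (m+1) (2*n+2)"
proof (rule antisym)
  show "degree (antichain_poly (MK_carrier m n) MK_le) \<le> min (m+1) (2*n+2)"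
    by (rule degree_le) (simp add: coeff_antichain_poly_MK MK_antichain_count_eq_0)
  show "min (m+1) (2*n+2) \<le> degree (antichain_poly (MK_carrier m n) MK_le)"
    using MK_antichain_count_top_pos[OF assms, of n]
    by (intro le_degree) (simp add: coeff_antichain_poly_MK)
qed

lemma monic_antichain_poly_MK_iff:
  assumes "1 \<le> m" "1 \<le> n"
  shows "monic_poly (antichain_poly (MK_carrier m n) MK_le) \<longleftrightarrow> m = 1 \<or> m = 2*n+1"
proof -
  have "monic_poly (antichain_poly (MK_carrier m n) MK_le)
      \<longleftrightarrow> MK_antichain_count m n (min (m+1) (2*n+2)) = 1"
    unfolding monic_poly_def degree_antichain_poly_MK[OF assms(1)] coeff_antichain_poly_MK by simp
  also have "\<dots> \<longleftrightarrow> m = 1 \<or> m = 2*n+1"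
  proof (cases "m \<le> 2*n")
    case True
    have "(2*n) choose (m-1) = 1 \<longleftrightarrow> m = 1"
    proof
      assume one: "(2*n) choose (m-1) = 1"
      show "m = 1"
      proof (rule ccontr)
        assume "m \<noteq> 1"
        then have "0 < m - 1" "m - 1 < 2*n" using True assms by auto
        then have "2 \<le> (2*n) choose (m-1)" by (rule binomial_ge_2)
        then show False using one by simp
      qed
    qed simp
    then show ?thesis unfolding MK_antichain_count_top[OF assms(1)] using True by auto
  next
    case False
    have pos: "0 < (m+1) choose (2*n+2)" using False by (simp add: zero_less_binomial_iff)
    have "(m choose (2*n+2)) + ((m+1) choose (2*n+2)) = 1 \<longleftrightarrow> m = 2*n+1"
    proof
      assume "(m choose (2*n+2)) + ((m+1) choose (2*n+2)) = 1"
      then have "m choose (2*n+2) = 0" using pos by linarith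
      then show "m = 2*n+1" using False by (simp add: binomial_eq_0_iff)
    qed simp
    moreover have "m \<noteq> 1" using False assms(2) by simp
    ultimately show ?thesis unfolding MK_antichain_count_top[OF assms(1)] using False by simp
  qed
  finally show ?thesis .
qed

lemma palindromic_antichain_poly_MK:
  assumes "1 \<le> n" "m = 1 \<or> m = 2*n+1"
  shows "palindromic (antichain_poly (MK_carrier m n) MK_le)"
proof -
  have "1 \<le> m" using assms(2) by auto
  have sym: "MK_antichain_count m n k = MK_antichain_count m n (min (m+1) (2*n+2) - k)"
    if k: "k \<le> min (m+1) (2*n+2)" for k
    using assms(2)
  proof
    assume "m = 1"
    then have top: "min (m+1) (2*n+2) = 2" using assms(1) by simp
    have count_2: "MK_antichain_count 1 n 2 = 1"
      by (simp add: MK_antichain_count_def binomial_eq_0 numeral_2_eq_2)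
    have "k \<le> 2" using k top by simp
    then consider "k = 0" | "k = 1" | "k = 2" by linarith
    then show ?thesis unfolding top using \<open>m = 1\<close> count_2 by cases (simp_all add: MK_antichain_count_0)
  next
    assume m: "m = 2*n+1"
    have factor: "MK_antichain_count m n j
        = ((2*n+2) choose j) * (((2*n+1) choose j) + (if 2 \<le> j then (2*n) choose (j-2) else 0))" for j
      unfolding MK_antichain_count_def m by (simp add: algebra_simps)
    have "k \<le> 2*n+2" using k m by simp
    then show ?thesis
      unfolding factor using m binomial_symmetric[of k "2*n+2"] binomial_Suc_plus_shift_symmetric[of k "2*n"]
      by simp
  qed
  show ?thesis
    unfolding palindromic_def degree_antichain_poly_MK[OF \<open>1 \<le> m\<close>] coeff_antichain_poly_MK
    by (intro allI impI arg_cong[where f = int] sym)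
qed

theorem theorem7p2:
  fixes m n :: nat
  assumes "m \<ge> 1" and "n \<ge> 1"
  shows "(unique_max_rank_level (MK_carrier m n) MK_le \<longleftrightarrow> (m = 1 \<or> m = 2*n+1))
       \<and> ((m = 1 \<or> m = 2*n+1) \<longleftrightarrow> monic_poly (antichain_poly (MK_carrier m n) MK_le))
       \<and> (monic_poly (antichain_poly (MK_carrier m n) MK_le)
            \<longleftrightarrow> palindromic (antichain_poly (MK_carrier m n) MK_le))"
proof -
  let ?N = "antichain_poly (MK_carrier m n) MK_le"
  have unique: "unique_max_rank_level (MK_carrier m n) MK_le \<longleftrightarrow> m = 1 \<or> m = 2*n+1"
    unfolding unique_max_rank_level_iff[OF finite_MK_carrier] card_rank_level_MK
    by (rule MK_level_size_unique_max_iff[OF assms])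
  have monic: "monic_poly ?N \<longleftrightarrow> m = 1 \<or> m = 2*n+1"
    by (rule monic_antichain_poly_MK_iff[OF assms])
  have "monic_poly ?N" if "palindromic ?N"
  proof -
    have "lead_coeff ?N = coeff ?N 0" using that by (rule palindromic_lead_coeff)
    then show ?thesis unfolding monic_poly_def by (simp add: coeff_antichain_poly_MK MK_antichain_count_0)
  qed
  then show ?thesis using unique monic palindromic_antichain_poly_MK[OF assms(2)] by blast
qed

end
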